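(* Let $(X,T)$ be a CAM $G$-system and let $(Y,S)$ be a topological factor of $(X,T)$, i.e. there is a continuous surjection $\pi\colon X\to Y$ with $\pi\circ T_g=S_g\circ\pi$ for all $g\in G$. If the action $S$ of $G$ on $Y$ is faithful, then $(Y,S)$ is CAM. In particular, if $G=\mathbb{Z}$ and $Y$ is infinite, then $(Y,S)$ is a CAM $\mathbb{Z}$-system.
   Context: Let $G$ be a countable discrete group. A topological $G$-system $(X,T)$ consists of a compact metric space $X$ and an action $T\colon G\to\mathrm{Homeo}(X)$, $g\mapsto T_g$. The system is topologically transitive if for all nonempty open $U,V\subseteq X$ there is $g\in G$ with $T_gU\cap V\neq\emptyset$; the action is faithful if $T_g=\mathrm{id}_X$ only when $g$ is the identity. A point is periodic if its $G$-orbit is finite. The system is chaotic almost minimal (CAM) if: (1) it is topologically transitive and the action is faithful; (2) the periodic points are dense in $X$; (3) every proper closed $T$-invariant subset of $X$ is finite. *)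

theory Defs
  imports "HOL-Analysis.Analysis" "HOL-Library.Countable"
begin

definition top_system :: "'a::metric_space set \<Rightarrow> ('g::group_add \<Rightarrow> 'a \<Rightarrow> 'a) \<Rightarrow> bool" where
  "top_system X T \<longleftrightarrow> compact X \<and>
     (\<forall>g. T g ` X \<subseteq> X \<and> continuous_on X (T g)) \<and>
     (\<forall>x\<in>X. T 0 x = x) \<and>
     (\<forall>g h. \<forall>x\<in>X. T (g + h) x = T g (T h x))"

definition top_transitive :: "'a::topological_space set \<Rightarrow> ('g \<Rightarrow> 'a \<Rightarrow> 'a) \<Rightarrow> bool" where
  "top_transitive X T \<longleftrightarrow>
     (\<forall>U V. openin (top_of_set X) U \<and> U \<noteq> {} \<and> openin (top_of_set X) V \<and> V \<noteq> {}
        \<longrightarrow> (\<exists>g. T g ` U \<inter> V \<noteq> {}))"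

definition faithful_action :: "'a set \<Rightarrow> ('g::zero \<Rightarrow> 'a \<Rightarrow> 'a) \<Rightarrow> bool" where
  "faithful_action X T \<longleftrightarrow> (\<forall>g. (\<forall>x\<in>X. T g x = x) \<longrightarrow> g = 0)"

definition periodic_points :: "'a set \<Rightarrow> ('g \<Rightarrow> 'a \<Rightarrow> 'a) \<Rightarrow> 'a set" where
  "periodic_points X T = {x\<in>X. finite (range (\<lambda>g. T g x))}"

definition T_invariant :: "'a set \<Rightarrow> ('g \<Rightarrow> 'a \<Rightarrow> 'a) \<Rightarrow> 'a set \<Rightarrow> bool" where
  "T_invariant X T A \<longleftrightarrow> A \<subseteq> X \<and> (\<forall>g. T g ` A \<subseteq> A)"

definition CAM :: "'a::metric_space set \<Rightarrow> ('g::group_add \<Rightarrow> 'a \<Rightarrow> 'a) \<Rightarrow> bool" where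
  "CAM X T \<longleftrightarrow> top_system X T \<and> top_transitive X T \<and> faithful_action X T \<and>
     X \<subseteq> closure (periodic_points X T) \<and>
     (\<forall>A. closedin (top_of_set X) A \<and> T_invariant X T A \<and> A \<noteq> X \<longrightarrow> finite A)"

definition factor_map :: "'a::topological_space set \<Rightarrow> ('g \<Rightarrow> 'a \<Rightarrow> 'a) \<Rightarrow>
    'b::topological_space set \<Rightarrow> ('g \<Rightarrow> 'b \<Rightarrow> 'b) \<Rightarrow> ('a \<Rightarrow> 'b) \<Rightarrow> bool" where
  "factor_map X T Y S \<pi> \<longleftrightarrow> continuous_on X \<pi> \<and> \<pi> ` X = Y \<and>
     (\<forall>g. \<forall>x\<in>X. \<pi> (T g x) = S g (\<pi> x))"

end

theory Submission
  imports Defs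
begin

text \<open>Transitivity, density of periodic points and finiteness of proper closed invariant sets
  all pass to factors: the first and last by pulling open resp. closed invariant sets back
  along the continuous surjection \<open>\<pi>\<close>, the second because \<open>\<pi>\<close> maps finite orbits onto finite
  orbits and is continuous. Only faithfulness can be lost. For \<open>\<int>\<close>-actions it is automatic on an
  infinite transitive space: if \<open>S n = id\<close> with \<open>n \<noteq> 0\<close>, the action factors through the finitely
  many maps \<open>S 0, \<dots>, S (\<bar>n\<bar> - 1)\<close>, and a point \<open>z\<close> outside the finite orbit of a point \<open>y\<close>
  has a neighbourhood that no neighbourhood of \<open>y\<close> ever reaches.\<close>

lemma factor_mapD:
  assumes "factor_map X T Y S \<pi>"
  shows "continuous_on X \<pi>" "\<pi> ` X = Y" "\<And>g x. x \<in> X \<Longrightarrow> \<pi> (T g x) = S g (\<pi> x)"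
  using assms unfolding factor_map_def by blast+

lemma factor_map_image_preimage:
  assumes "factor_map X T Y S \<pi>" "B \<subseteq> Y"
  shows "\<pi> ` (X \<inter> \<pi> -` B) = B"
  using factor_mapD(2)[OF assms(1)] assms(2) by blast

lemma factor_map_openin_preimage:
  assumes fm: "factor_map X T Y S \<pi>" and "openin (top_of_set Y) U"
  shows "openin (top_of_set X) (X \<inter> \<pi> -` U)"
proof -
  obtain V where "open V" "U = Y \<inter> V"
    using assms(2) by (auto simp: openin_open)
  moreover have "X \<inter> \<pi> -` (Y \<inter> V) = X \<inter> \<pi> -` V"
    using factor_mapD(2)[OF fm] by blast
  ultimately show ?thesis
    using continuous_openin_preimage_gen[OF factor_mapD(1)[OF fm], of V] by simp
qed

lemma factor_map_top_transitive:
  assumes tr: "top_transitive X T" and fm: "factor_map X T Y S \<pi>"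
  shows "top_transitive Y S"
  unfolding top_transitive_def
proof (intro allI impI)
  fix U V
  assume h: "openin (top_of_set Y) U \<and> U \<noteq> {} \<and> openin (top_of_set Y) V \<and> V \<noteq> {}"
  have pullback: "openin (top_of_set X) (X \<inter> \<pi> -` W) \<and> X \<inter> \<pi> -` W \<noteq> {}"
    if "openin (top_of_set Y) W" "W \<noteq> {}" for W
    using factor_map_openin_preimage[OF fm that(1)]
      factor_map_image_preimage[OF fm openin_imp_subset[OF that(1)]] that(2) by force
  obtain g where "T g ` (X \<inter> \<pi> -` U) \<inter> (X \<inter> \<pi> -` V) \<noteq> {}"
    using tr[unfolded top_transitive_def, rule_format] pullback[of U] pullback[of V] h by meson
  then obtain x where "x \<in> X" "\<pi> x \<in> U" "\<pi> (T g x) \<in> V"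
    by auto
  then have "S g (\<pi> x) \<in> S g ` U \<inter> V"
    using factor_mapD(3)[OF fm] by auto
  then show "\<exists>g. S g ` U \<inter> V \<noteq> {}"
    by blast
qed

lemma factor_map_periodic_points:
  assumes fm: "factor_map X T Y S \<pi>"
  shows "\<pi> ` periodic_points X T \<subseteq> periodic_points Y S"
proof
  fix y assume "y \<in> \<pi> ` periodic_points X T"
  then obtain x where x: "x \<in> X" "finite (range (\<lambda>g. T g x))" "y = \<pi> x"
    by (auto simp: periodic_points_def)
  then have "range (\<lambda>g. S g y) = \<pi> ` range (\<lambda>g. T g x)"
    using factor_mapD(3)[OF fm] by (simp add: image_image)
  moreover have "y \<in> Y"
    using factor_mapD(2)[OF fm] x(1,3) by blast
  ultimately show "y \<in> periodic_points Y S"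
    using x(2) by (simp add: periodic_points_def)
qed

lemma factor_map_dense_periodic_points:
  assumes fm: "factor_map X T Y S \<pi>" and "closed X"
    and dense: "X \<subseteq> closure (periodic_points X T)"
  shows "Y \<subseteq> closure (periodic_points Y S)"
proof -
  have "closure (periodic_points X T) \<subseteq> X"
    using \<open>closed X\<close> by (simp add: closure_minimal periodic_points_def)
  then have "continuous_on (closure (periodic_points X T)) \<pi>"
    using factor_mapD(1)[OF fm] continuous_on_subset by blast
  then have "\<pi> ` closure (periodic_points X T) \<subseteq> closure (periodic_points Y S)"
    by (rule image_closure_subset) (use factor_map_periodic_points[OF fm] closure_subset in auto)
  then show ?thesis
    using factor_mapD(2)[OF fm] dense by blast
qed

lemma factor_map_T_invariant_preimage:
  assumes fm: "factor_map X T Y S \<pi>" and "\<And>g. T g ` X \<subseteq> X" "T_invariant Y S B"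
  shows "T_invariant X T (X \<inter> \<pi> -` B)"
  using assms(2,3) factor_mapD(3)[OF fm] unfolding T_invariant_def by fastforce

lemma factor_map_proper_invariant_finite:
  assumes fm: "factor_map X T Y S \<pi>" and TX: "\<And>g. T g ` X \<subseteq> X"
    and fin: "\<And>A. closedin (top_of_set X) A \<Longrightarrow> T_invariant X T A \<Longrightarrow> A \<noteq> X \<Longrightarrow> finite A"
    and B: "closedin (top_of_set Y) B" "T_invariant Y S B" "B \<noteq> Y"
  shows "finite B"
proof -
  have BY: "B \<subseteq> Y"
    using B(1) closedin_imp_subset by blast
  have "\<pi> \<in> X \<rightarrow> Y"
    using factor_mapD(2)[OF fm] by blast
  then have "closedin (top_of_set X) (X \<inter> \<pi> -` B)"
    using factor_mapD(1)[OF fm] B(1) continuous_closedin_preimage_gen by blast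
  moreover have "X \<inter> \<pi> -` B \<noteq> X"
    using factor_mapD(2)[OF fm] B(3) BY by blast
  ultimately have "finite (X \<inter> \<pi> -` B)"
    using fin factor_map_T_invariant_preimage[OF fm TX B(2)] by blast
  then show ?thesis
    using factor_map_image_preimage[OF fm BY] by (metis finite_imageI)
qed

lemma CAM_factor:
  assumes cam: "CAM X T" and "top_system Y S" and fm: "factor_map X T Y S \<pi>"
    and "faithful_action Y S"
  shows "CAM Y S"
proof -
  have "closed X" "\<And>g. T g ` X \<subseteq> X"
    using cam by (auto simp: CAM_def top_system_def compact_imp_closed)
  then show ?thesis
    using assms factor_map_top_transitive factor_map_dense_periodic_points
      factor_map_proper_invariant_finite
    unfolding CAM_def by metis
qed

lemma int_action_multiple_period:
  fixes S :: "int \<Rightarrow> 'b::metric_space \<Rightarrow> 'b"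
  assumes ts: "top_system Y S" and n: "\<forall>x\<in>Y. S n x = x" and x: "x \<in> Y"
  shows "S (m * n) x = x"
proof -
  have add: "\<And>g h x. x \<in> Y \<Longrightarrow> S (g + h) x = S g (S h x)"
    and zero: "\<And>x. x \<in> Y \<Longrightarrow> S 0 x = x"
    using ts by (auto simp: top_system_def)
  show ?thesis
  proof (induction m rule: int_induct[where k = 0])
    case base
    then show ?case using zero x by simp
  next
    case (step1 i)
    then show ?case using add n x by (simp add: distrib_right)
  next
    case (step2 i)
    have "x = S ((i - 1) * n + n) x"
      using step2 by (simp add: algebra_simps)
    also have "\<dots> = S ((i - 1) * n) x"
      using add n x by simp
    finally show ?case by simp
  qed
qed

lemma int_action_mod_period:
  fixes S :: "int \<Rightarrow> 'b::metric_space \<Rightarrow> 'b"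
  assumes ts: "top_system Y S" and n: "\<forall>x\<in>Y. S n x = x" and x: "x \<in> Y"
  shows "S g x = S (g mod \<bar>n\<bar>) x"
proof -
  have "g = g mod \<bar>n\<bar> + (g div \<bar>n\<bar>) * \<bar>n\<bar>"
    by simp
  also have "(g div \<bar>n\<bar>) * \<bar>n\<bar> = (g div \<bar>n\<bar>) * sgn n * n"
    by (simp add: abs_sgn ac_simps)
  finally have "S g x = S (g mod \<bar>n\<bar>) (S ((g div \<bar>n\<bar>) * sgn n * n) x)"
    using ts x by (metis top_system_def)
  then show ?thesis
    using int_action_multiple_period[OF ts n x] by simp
qed

lemma not_top_transitive_finitely_many_maps:
  fixes Y :: "'b::metric_space set" and S :: "'g \<Rightarrow> 'b \<Rightarrow> 'b"
  assumes "infinite Y" "finite K" and cont: "\<And>k. continuous_on Y (S k)"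
    and reduce: "\<And>g. \<exists>k\<in>K. \<forall>x\<in>Y. S g x = S k x"
  shows "\<not> top_transitive Y S"
proof
  assume tr: "top_transitive Y S"
  obtain y where y: "y \<in> Y"
    using \<open>infinite Y\<close> by fastforce
  obtain z where z: "z \<in> Y" "z \<notin> (\<lambda>k. S k y) ` K"
    using \<open>infinite Y\<close> \<open>finite K\<close> by (metis finite_imageI finite_subset subsetI)
  define m where "m = Min (insert 1 ((\<lambda>k. dist (S k y) z) ` K))"
  have "m > 0"
    using \<open>finite K\<close> z(2) by (auto simp: m_def)
  have m_le: "m \<le> dist (S k y) z" if "k \<in> K" for k
    using \<open>finite K\<close> that by (simp add: m_def)
  define e where "e = m / 2"
  have e: "e > 0" "\<And>k. k \<in> K \<Longrightarrow> e < dist (S k y) z"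
    using \<open>m > 0\<close> m_le by (fastforce simp: e_def)+
  define U where "U = {x \<in> Y. \<forall>k\<in>K. S k x \<notin> cball z e}"
  define V where "V = Y \<inter> ball z e"
  have "openin (top_of_set Y) ((\<Inter>k\<in>K. Y \<inter> S k -` (- cball z e)) \<inter> topspace (top_of_set Y))"
    using \<open>finite K\<close> cont
    by (intro openin_INT) (simp_all add: continuous_openin_preimage_gen open_Compl)
  moreover have "(\<Inter>k\<in>K. Y \<inter> S k -` (- cball z e)) \<inter> topspace (top_of_set Y) = U"
    by (auto simp: U_def)
  ultimately have "openin (top_of_set Y) U"
    by simp
  moreover have "y \<in> U"
    using y e(2) by (auto simp: U_def dist_commute not_le)
  moreover have "openin (top_of_set Y) V" "z \<in> V"
    using z(1) e(1) by (auto simp: V_def openin_open_Int)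
  ultimately obtain g where "S g ` U \<inter> V \<noteq> {}"
    using tr unfolding top_transitive_def by blast
  then obtain x where x: "x \<in> U" "S g x \<in> V"
    by blast
  obtain k where "k \<in> K" "S g x = S k x"
    using reduce[of g] x(1) unfolding U_def by blast
  then have "S g x \<notin> cball z e"
    using x(1) by (simp add: U_def)
  then show False
    using x(2) ball_subset_cball by (auto simp: V_def)
qed

lemma top_transitive_int_action_faithful:
  fixes Y :: "'b::metric_space set" and S :: "int \<Rightarrow> 'b \<Rightarrow> 'b"
  assumes ts: "top_system Y S" and "infinite Y" and tr: "top_transitive Y S"
  shows "faithful_action Y S"
  unfolding faithful_action_def
proof (intro allI impI)
  fix n assume n: "\<forall>x\<in>Y. S n x = x"
  show "n = 0"
  proof (rule ccontr)
    assume "n \<noteq> 0"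
    then have "g mod \<bar>n\<bar> \<in> {0..<\<bar>n\<bar>}" for g
      by simp
    then have "\<exists>k\<in>{0..<\<bar>n\<bar>}. \<forall>x\<in>Y. S g x = S k x" for g
      using int_action_mod_period[OF ts n] by blast
    moreover have "continuous_on Y (S k)" for k
      using ts by (simp add: top_system_def)
    ultimately show False
      using not_top_transitive_finitely_many_maps[of Y "{0..<\<bar>n\<bar>}" S] \<open>infinite Y\<close> tr
      by blast
  qed
qed

theorem proposition2p6:
  fixes X :: "'a::metric_space set" and Y :: "'b::metric_space set"
    and T :: "'g::{group_add,countable} \<Rightarrow> 'a \<Rightarrow> 'a" and S :: "'g \<Rightarrow> 'b \<Rightarrow> 'b"
    and \<pi> :: "'a \<Rightarrow> 'b"
  shows "(CAM X T \<and> top_system Y S \<and> factor_map X T Y S \<pi> \<and> faithful_action Y S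
            \<longrightarrow> CAM Y S)
       \<and> (\<forall>(T' :: int \<Rightarrow> 'a \<Rightarrow> 'a) (S' :: int \<Rightarrow> 'b \<Rightarrow> 'b).
            CAM X T' \<and> top_system Y S' \<and> factor_map X T' Y S' \<pi> \<and> infinite Y
            \<longrightarrow> CAM Y S')"
proof (intro conjI impI allI)
  show "CAM Y S" if "CAM X T \<and> top_system Y S \<and> factor_map X T Y S \<pi> \<and> faithful_action Y S"
    using that CAM_factor by blast
next
  fix T' :: "int \<Rightarrow> 'a \<Rightarrow> 'a" and S' :: "int \<Rightarrow> 'b \<Rightarrow> 'b"
  assume h: "CAM X T' \<and> top_system Y S' \<and> factor_map X T' Y S' \<pi> \<and> infinite Y"
  then have "top_transitive Y S'"
    using factor_map_top_transitive by (auto simp: CAM_def)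
  then have "faithful_action Y S'"
    using h top_transitive_int_action_faithful by blast
  then show "CAM Y S'"
    using h CAM_factor by blast
qed

end
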